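(* Let $G=(V,E)$ be a finite undirected graph with $m=|E|\ge1$ edges, let $k_u$ denote the degree of node $u$, and let $G'$ be the random multigraph produced from $G$ by the configuration model (see context). Fix distinct nodes $i,j\in V$ with $k_i\ge1$ and $k_j\ge1$, and let $P_{ij}=\frac1{k_i}+\frac1{k_j}$. Let $W_{ij}$ be the random weight of the pair $(i,j)$ computed in $G'$ by the rule in the context. Write $P_{\mathrm{adj}}=\Pr(i \text{ and } j \text{ connected in } G')$, and for each $r\in V\setminus\{i,j\}$, $P_{\mathrm{cn}}(r)=\Pr(i \text{ and } r \text{ connected and } j \text{ and } r \text{ connected in } G')$ and $P_{\mathrm{tri}}(r)=\Pr(i,r \text{ connected},\ j,r \text{ connected, and } i,j \text{ connected in } G')$. Then: 1. If $k_i=1$ or $k_j=1$, \[ E[W_{ij}]=\frac{P_{ij}\sum_{r\in V\setminus\{i,j\}}P_{\mathrm{cn}}(r)}{4}+P_{ij}P_{\mathrm{adj}}. \] 2. If $k_i>1$ and $k_j>1$, \[ E[W_{ij}]=\frac{P_{ij}}{4}\sum_{r\in V\setminus\{i,j\}}\big(P_{\mathrm{cn}}(r)-P_{\mathrm{tri}}(r)\big)+2P_{ij}\sum_{r\in V\setminus\{i,j\}}P_{\mathrm{tri}}(r)+3P_{ij}P_{\mathrm{adj}}. \] Moreover, with the functions $A,C,T$ defined by $A(a,b,M)=\sum_{t=1}^{\min\{a,b\}}(-1)^{t+1}\frac{\binom{a}{t}\binom{b}{t}t!}{\prod_{p=1}^{t}(2M+1-2p)}$, $C(a,b,c,M)=\sum_{t=1}^{\min\{b,c-1\}}(-1)^{t+1}A(a,c-t,M-t)\frac{\binom{c}{t}\binom{b}{t}t!}{\prod_{p=1}^{t}(2M+1-2p)}$,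 $T(a,b,c,M)=\sum_{t=1}^{\min\{a-1,b-1\}}(-1)^{t+1}C(a-t,b-t,c,M-t)\frac{\binom{a}{t}\binom{b}{t}t!}{\prod_{p=1}^{t}(2M+1-2p)}$ (empty sums $=0$), one has $P_{\mathrm{adj}}=A(k_i,k_j,m)$, $P_{\mathrm{cn}}(r)=C(k_i,k_j,k_r,m)$ and $P_{\mathrm{tri}}(r)=T(k_i,k_j,k_r,m)$, so that the two expressions above give $E[W_{ij}]$ explicitly in terms of the degrees and $m$.
   Context: Configuration model: given $G=(V,E)$ with $m$ edges and degrees $k_u$, each node $u$ is given $k_u$ stubs (half-edges), $2m$ in total; a perfect matching of the $2m$ stubs is chosen uniformly at random among all $\prod_{p=1}^{m}(2m+1-2p)$ perfect matchings, and each matched pair of stubs (attached to nodes $u$ and $v$) becomes an edge of the random multigraph $G'$. Degrees are preserved. Two distinct nodes $u,v$ are connected in $G'$ if at least one stub of $u$ is matched with a stub of $v$. A node $r\notin\{i,j\}$ is a common neighbour of $i$ and $j$ if $r$ is connected to both $i$ and $j$. Weight rule (evaluated in $G'$, with degrees $k_i,k_j\ge 1$): let $P_{ij}=\frac1{k_i}+\frac1{k_j}$ and $CN_{ij}=(\text{number of common neighbours of } i,j+1)P_{ij}$. Then $W_{ij}=\frac{CN_{ij}-P_{ij}}{4}$ if $i$ and $j$ are not connected; $W_{ij}=P_{ij}$ if $i,j$ are connected and ($k_i=1$ or $k_j=1$); $W_{ij}=2CN_{ij}+P_{ij}$ if $i,j$ are connected and $k_i>1$, $k_j>1$. *)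

theory Defs
  imports "HOL-Probability.Probability_Mass_Function"
begin

definition deg :: "'a set \<Rightarrow> ('a \<Rightarrow> 'a \<Rightarrow> bool) \<Rightarrow> 'a \<Rightarrow> nat" where
  "deg V E u = card {v \<in> V. E u v}"

definition num_edges :: "'a set \<Rightarrow> ('a \<Rightarrow> 'a \<Rightarrow> bool) \<Rightarrow> nat" where
  "num_edges V E = card {{u, v} | u v. u \<in> V \<and> v \<in> V \<and> E u v}"

text \<open>Stubs (half-edges): node u carries stubs (u,0),...,(u,deg u - 1).\<close>
definition stubs :: "'a set \<Rightarrow> ('a \<Rightarrow> 'a \<Rightarrow> bool) \<Rightarrow> ('a \<times> nat) set" where
  "stubs V E = {(u, s). u \<in> V \<and> s < deg V E u}"

text \<open>Perfect matchings of the stubs, represented as fixed-point-free involutions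
on the stub set (identity outside it).\<close>
definition stub_matchings :: "'a set \<Rightarrow> ('a \<Rightarrow> 'a \<Rightarrow> bool) \<Rightarrow> (('a \<times> nat) \<Rightarrow> ('a \<times> nat)) set" where
  "stub_matchings V E =
     {f. (\<forall>x\<in>stubs V E. f x \<in> stubs V E \<and> f x \<noteq> x \<and> f (f x) = x) \<and>
         (\<forall>x. x \<notin> stubs V E \<longrightarrow> f x = x)}"

definition config_model :: "'a set \<Rightarrow> ('a \<Rightarrow> 'a \<Rightarrow> bool) \<Rightarrow> (('a \<times> nat) \<Rightarrow> ('a \<times> nat)) pmf" where
  "config_model V E = pmf_of_set (stub_matchings V E)"

definition cm_conn :: "'a set \<Rightarrow> ('a \<Rightarrow> 'a \<Rightarrow> bool) \<Rightarrow> (('a \<times> nat) \<Rightarrow> ('a \<times> nat)) \<Rightarrow> 'a \<Rightarrow> 'a \<Rightarrow> bool" where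
  "cm_conn V E f u v = (\<exists>s < deg V E u. \<exists>t < deg V E v. f (u, s) = (v, t))"

definition cm_common :: "'a set \<Rightarrow> ('a \<Rightarrow> 'a \<Rightarrow> bool) \<Rightarrow> (('a \<times> nat) \<Rightarrow> ('a \<times> nat)) \<Rightarrow> 'a \<Rightarrow> 'a \<Rightarrow> nat" where
  "cm_common V E f i j =
     card {r \<in> V. r \<noteq> i \<and> r \<noteq> j \<and> cm_conn V E f i r \<and> cm_conn V E f j r}"

definition Pij :: "'a set \<Rightarrow> ('a \<Rightarrow> 'a \<Rightarrow> bool) \<Rightarrow> 'a \<Rightarrow> 'a \<Rightarrow> real" where
  "Pij V E i j = 1 / real (deg V E i) + 1 / real (deg V E j)"

definition CNij :: "'a set \<Rightarrow> ('a \<Rightarrow> 'a \<Rightarrow> bool) \<Rightarrow> (('a \<times> nat) \<Rightarrow> ('a \<times> nat)) \<Rightarrow> 'a \<Rightarrow> 'a \<Rightarrow> real" where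
  "CNij V E f i j = (real (cm_common V E f i j) + 1) * Pij V E i j"

text \<open>Weight rule, evaluated in G' (degrees in G' equal those in G).\<close>
definition weight :: "'a set \<Rightarrow> ('a \<Rightarrow> 'a \<Rightarrow> bool) \<Rightarrow> (('a \<times> nat) \<Rightarrow> ('a \<times> nat)) \<Rightarrow> 'a \<Rightarrow> 'a \<Rightarrow> real" where
  "weight V E f i j =
     (if \<not> cm_conn V E f i j then (CNij V E f i j - Pij V E i j) / 4
      else if deg V E i = 1 \<or> deg V E j = 1 then Pij V E i j
      else 2 * CNij V E f i j + Pij V E i j)"

definition stubprod :: "nat \<Rightarrow> int \<Rightarrow> real" where
  "stubprod t M = (\<Prod>p = 1..t. real_of_int (2 * M + 1 - 2 * int p))"

definition fA :: "nat \<Rightarrow> nat \<Rightarrow> int \<Rightarrow> real" where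
  "fA a b M = (\<Sum>t = 1..min a b.
      (-1) ^ (t + 1) * (real (a choose t) * real (b choose t) * fact t) / stubprod t M)"

definition fC :: "nat \<Rightarrow> nat \<Rightarrow> nat \<Rightarrow> int \<Rightarrow> real" where
  "fC a b c M = (\<Sum>t = 1..min b (c - 1).
      (-1) ^ (t + 1) * fA a (c - t) (M - int t) *
      (real (c choose t) * real (b choose t) * fact t) / stubprod t M)"

definition fT :: "nat \<Rightarrow> nat \<Rightarrow> nat \<Rightarrow> int \<Rightarrow> real" where
  "fT a b c M = (\<Sum>t = 1..min (a - 1) (b - 1).
      (-1) ^ (t + 1) * fC (a - t) (b - t) c (M - int t) *
      (real (a choose t) * real (b choose t) * fact t) / stubprod t M)"

end

theory Submission
  imports Defs
begin

text \<open>The configuration model is the uniform distribution on the perfect matchings of the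
  \<open>2m\<close> stubs, of which there are \<open>(2m-1)!!\<close>. Each of the three probabilities is computed by
  inclusion-exclusion over the set \<open>B\<close> of stubs of one node that are matched into the stubs of
  another. Fixing such a partial matching of \<open>t\<close> pairs, which can be done in
  \<open>(b choose t) t!\<close> ways, leaves a uniform perfect matching of the other \<open>2(m-t)\<close> stubs, so the
  \<open>t\<close>-th term carries the factor \<open>(a choose t) (b choose t) t! / \<Prod>p=1..t. (2m+1-2p)\<close>.
  The event left over is trivial for \<open>A\<close>, an adjacency in the smaller model for \<open>C\<close> and
  a common-neighbour event for \<open>T\<close>, whence the nesting of \<open>A\<close> in \<open>C\<close> in \<open>T\<close>.
  The expected weight is linear in the indicators of adjacency, common neighbours and
  triangles; a node of degree 1 adjacent to the other node has no further neighbour, which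
  removes the triangle terms.\<close>

section \<open>Perfect matchings\<close>

definition perfect_matchings :: "'s set \<Rightarrow> ('s \<Rightarrow> 's) set" where
  "perfect_matchings S =
     {f. (\<forall>x\<in>S. f x \<in> S \<and> f x \<noteq> x \<and> f (f x) = x) \<and> (\<forall>x. x \<notin> S \<longrightarrow> f x = x)}"

definition unmatch :: "'s set \<Rightarrow> ('s \<Rightarrow> 's) \<Rightarrow> 's \<Rightarrow> 's" where
  "unmatch D f z = (if z \<in> D then z else f z)"

lemma perfect_matchingsD:
  assumes "f \<in> perfect_matchings S"
  shows perfect_matchings_involution: "f (f x) = x"
    and perfect_matchings_closed: "x \<in> S \<Longrightarrow> f x \<in> S"
    and perfect_matchings_no_fixpoint: "x \<in> S \<Longrightarrow> f x \<noteq> x"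
    and perfect_matchings_outside: "x \<notin> S \<Longrightarrow> f x = x"
  using assms unfolding perfect_matchings_def by (simp_all, metis)

lemma finite_perfect_matchings:
  assumes "finite S"
  shows "finite (perfect_matchings S)"
proof (rule inj_on_finite)
  show "inj_on (\<lambda>f. restrict f S) (perfect_matchings S)"
  proof (rule inj_onI, rule ext)
    fix f g z
    assume "f \<in> perfect_matchings S" "g \<in> perfect_matchings S" "restrict f S = restrict g S"
    then show "f z = g z"
      by (cases "z \<in> S") (auto dest: fun_cong[of _ _ z] simp: perfect_matchings_outside)
  qed
  show "(\<lambda>f. restrict f S) ` perfect_matchings S \<subseteq> S \<rightarrow>\<^sub>E S"
    by (auto simp: perfect_matchings_closed)
  show "finite (S \<rightarrow>\<^sub>E S)"
    using assms by (simp add: finite_PiE)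
qed

lemma unmatch_in_perfect_matchings:
  assumes f: "f \<in> perfect_matchings S" and fx: "f x = y"
  shows "unmatch {x, y} f \<in> perfect_matchings (S - {x, y})"
proof -
  have "f y = x"
    using fx perfect_matchings_involution[OF f, of x] by simp
  then have "f z \<notin> {x, y}" if "z \<notin> {x, y}" for z
    using that fx perfect_matchings_involution[OF f, of z] by auto
  then show ?thesis
    using f unfolding perfect_matchings_def unmatch_def by auto
qed

lemma rematch_in_perfect_matchings:
  assumes h: "h \<in> perfect_matchings (S - {x, y})" and "x \<in> S" "y \<in> S" "x \<noteq> y"
  shows "h(x := y, y := x) \<in> perfect_matchings S"
proof -
  have "h x = x" "h y = y"
    using perfect_matchings_outside[OF h] by auto
  then show ?thesis
    using assms unfolding perfect_matchings_def by auto
qed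

lemma card_perfect_matchings_matching_pair:
  assumes "x \<in> S" "y \<in> S" "x \<noteq> y"
    and PQ: "\<And>f. f \<in> perfect_matchings S \<Longrightarrow> f x = y \<Longrightarrow> P f \<longleftrightarrow> Q (unmatch {x, y} f)"
  shows "card {f \<in> perfect_matchings S. f x = y \<and> P f} =
    card {h \<in> perfect_matchings (S - {x, y}). Q h}"
proof -
  have "bij_betw (unmatch {x, y}) {f \<in> perfect_matchings S. f x = y \<and> P f}
      {h \<in> perfect_matchings (S - {x, y}). Q h}"
  proof (rule bij_betw_byWitness[where f' = "\<lambda>h. h(x := y, y := x)"])
    show "\<forall>f\<in>{f \<in> perfect_matchings S. f x = y \<and> P f}. (unmatch {x, y} f)(x := y, y := x) = f"
    proof
      fix f assume f: "f \<in> {f \<in> perfect_matchings S. f x = y \<and> P f}"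
      then have "f y = x"
        using perfect_matchings_involution[of f S x] by simp
      with f show "(unmatch {x, y} f)(x := y, y := x) = f"
        by (auto simp: unmatch_def fun_eq_iff)
    qed
    show "\<forall>h\<in>{h \<in> perfect_matchings (S - {x, y}). Q h}. unmatch {x, y} (h(x := y, y := x)) = h"
    proof
      fix h assume "h \<in> {h \<in> perfect_matchings (S - {x, y}). Q h}"
      then have "h x = x" "h y = y"
        using perfect_matchings_outside[of h "S - {x, y}"] by auto
      then show "unmatch {x, y} (h(x := y, y := x)) = h"
        by (auto simp: unmatch_def fun_eq_iff)
    qed
    show "unmatch {x, y} ` {f \<in> perfect_matchings S. f x = y \<and> P f}
        \<subseteq> {h \<in> perfect_matchings (S - {x, y}). Q h}"
      using PQ by (auto intro: unmatch_in_perfect_matchings)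
    show "(\<lambda>h. h(x := y, y := x)) ` {h \<in> perfect_matchings (S - {x, y}). Q h}
        \<subseteq> {f \<in> perfect_matchings S. f x = y \<and> P f}"
    proof clarify
      fix h assume h: "h \<in> perfect_matchings (S - {x, y})" "Q h"
      have h': "h(x := y, y := x) \<in> perfect_matchings S"
        using h(1) assms(1-3) by (rule rematch_in_perfect_matchings)
      have "unmatch {x, y} (h(x := y, y := x)) = h"
        using perfect_matchings_outside[OF h(1)] by (auto simp: unmatch_def fun_eq_iff)
      then show "h(x := y, y := x) \<in> perfect_matchings S \<and> (h(x := y, y := x)) x = y \<and>
          P (h(x := y, y := x))"
        using h' h(2) PQ[OF h'] assms(3) by simp
    qed
  qed
  then show ?thesis
    by (rule bij_betw_same_card)
qed

lemma card_eq_sum_card_fibres: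
  assumes "finite A" "finite T" "g ` A \<subseteq> T"
  shows "card A = (\<Sum>y\<in>T. card {a \<in> A. g a = y})"
  using sum.group[of A T g "\<lambda>_. 1::nat"] assms by simp

fun num_matchings :: "nat \<Rightarrow> nat" where
  "num_matchings 0 = 1"
| "num_matchings (Suc n) = (2 * n + 1) * num_matchings n"

lemma num_matchings_pos: "num_matchings n > 0"
  by (induction n) auto

lemma card_perfect_matchings:
  assumes "finite S" "card S = 2 * n"
  shows "card (perfect_matchings S) = num_matchings n"
  using assms
proof (induction n arbitrary: S)
  case 0
  then have "perfect_matchings S = {id}"
    by (auto simp: perfect_matchings_def fun_eq_iff)
  then show ?case
    by simp
next
  case (Suc n)
  then have "S \<noteq> {}"
    by auto
  then obtain x where x: "x \<in> S"
    by blast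
  have "card (perfect_matchings S) = (\<Sum>y\<in>S - {x}. card {f \<in> perfect_matchings S. f x = y})"
    using Suc.prems x
    by (intro card_eq_sum_card_fibres)
      (auto simp: finite_perfect_matchings perfect_matchings_closed perfect_matchings_no_fixpoint)
  also have "\<dots> = (\<Sum>y\<in>S - {x}. num_matchings n)"
  proof (rule sum.cong[OF refl])
    fix y assume y: "y \<in> S - {x}"
    have "card {f \<in> perfect_matchings S. f x = y} = card {f \<in> perfect_matchings S. f x = y \<and> True}"
      by simp
    also have "\<dots> = card {h \<in> perfect_matchings (S - {x, y}). True}"
      using x y by (intro card_perfect_matchings_matching_pair) auto
    also have "\<dots> = num_matchings n"
    proof -
      have "card (S - {x, y}) = 2 * n"
        using Suc.prems x y by (subst card_Diff_subset) auto
      then show ?thesis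
        using Suc.IH Suc.prems by simp
    qed
    finally show "card {f \<in> perfect_matchings S. f x = y} = num_matchings n" .
  qed
  also have "\<dots> = num_matchings (Suc n)"
    using Suc.prems x by simp
  finally show ?case .
qed

section \<open>Matchings linking prescribed sets of stubs\<close>

definition links :: "('s \<Rightarrow> 's) \<Rightarrow> 's set \<Rightarrow> 's set \<Rightarrow> bool" where
  "links f X Y \<longleftrightarrow> (\<exists>x\<in>X. f x \<in> Y)"

lemma links_unmatch:
  assumes "f \<in> perfect_matchings S" "f x = y" "x \<notin> X" "y \<notin> X"
  shows "links f X Z \<longleftrightarrow> links (unmatch {x, y} f) X (Z - {x, y})"
proof -
  have "f w \<notin> {x, y}" if "w \<in> X" for w
    using that assms by (metis insertE perfect_matchings_involution singletonD)
  moreover have "w \<notin> {x, y}" if "w \<in> X" for w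
    using that assms by blast
  ultimately show ?thesis
    unfolding links_def unmatch_def by auto
qed

lemma maps_into_unmatch:
  assumes "f \<in> perfect_matchings S" "f x = y" "x \<in> A" "y \<notin> A"
  shows "(\<forall>a\<in>A. f a \<in> Y) \<longleftrightarrow> y \<in> Y \<and> (\<forall>a\<in>A - {x}. unmatch {x, y} f a \<in> Y - {y})"
proof -
  have "f a \<noteq> y" if "a \<in> A - {x}" for a
    using that assms by (metis DiffE insertI1 perfect_matchings_involution)
  moreover have "a \<notin> {x, y}" if "a \<in> A - {x}" for a
    using that assms by blast
  ultimately show ?thesis
    using assms unfolding unmatch_def by auto
qed

lemma card_perfect_matchings_into_split:
  assumes "finite S" "x \<in> A" "A \<subseteq> S" "Y \<subseteq> S" "A \<inter> Y = {}"
    and Q: "\<And>f y. f \<in> perfect_matchings S \<Longrightarrow> f x = y \<Longrightarrow> y \<in> Y \<Longrightarrow>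
      Q Y f \<longleftrightarrow> Q (Y - {y}) (unmatch {x, y} f)"
  shows "card {f \<in> perfect_matchings S. (\<forall>a\<in>A. f a \<in> Y) \<and> Q Y f} =
    (\<Sum>y\<in>Y. card {h \<in> perfect_matchings (S - {x, y}).
      (\<forall>a\<in>A - {x}. h a \<in> Y - {y}) \<and> Q (Y - {y}) h})"
proof -
  let ?F = "{f \<in> perfect_matchings S. (\<forall>a\<in>A. f a \<in> Y) \<and> Q Y f}"
  have "card ?F = (\<Sum>y\<in>Y. card {f \<in> ?F. f x = y})"
    using assms(1-4) finite_subset
    by (intro card_eq_sum_card_fibres) (auto simp: finite_perfect_matchings)
  also have "\<dots> = (\<Sum>y\<in>Y. card {h \<in> perfect_matchings (S - {x, y}).
      (\<forall>a\<in>A - {x}. h a \<in> Y - {y}) \<and> Q (Y - {y}) h})"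
  proof (rule sum.cong[OF refl])
    fix y assume y: "y \<in> Y"
    have "{f \<in> ?F. f x = y} = {f \<in> perfect_matchings S. f x = y \<and> (\<forall>a\<in>A. f a \<in> Y) \<and> Q Y f}"
      by auto
    also have "card \<dots> = card {h \<in> perfect_matchings (S - {x, y}).
        (\<forall>a\<in>A - {x}. h a \<in> Y - {y}) \<and> Q (Y - {y}) h}"
    proof (rule card_perfect_matchings_matching_pair)
      show "x \<in> S" "y \<in> S" "x \<noteq> y"
        using assms(2-5) y by auto
      fix f assume f: "f \<in> perfect_matchings S" "f x = y"
      have "y \<notin> A"
        using assms(5) y by auto
      then show "(\<forall>a\<in>A. f a \<in> Y) \<and> Q Y f \<longleftrightarrow>
          (\<forall>a\<in>A - {x}. unmatch {x, y} f a \<in> Y - {y}) \<and> Q (Y - {y}) (unmatch {x, y} f)"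
        using maps_into_unmatch[OF f assms(2) \<open>y \<notin> A\<close>, of Y] Q[OF f y] y by blast
    qed
    finally show "card {f \<in> ?F. f x = y} = card {h \<in> perfect_matchings (S - {x, y}).
        (\<forall>a\<in>A - {x}. h a \<in> Y - {y}) \<and> Q (Y - {y}) h}" .
  qed
  finally show ?thesis .
qed

lemma card_times_choose_fact:
  "real n * (real ((n - 1) choose t) * fact t) = real (n choose Suc t) * fact (Suc t)"
proof -
  have "real (Suc t) * real (n choose Suc t) = real n * real ((n - 1) choose t)"
    by (metis binomial_absorption of_nat_mult)
  then show ?thesis
    by (simp add: fact_Suc[of t] mult.assoc mult.left_commute)
qed

text \<open>Each of the \<open>(card Y choose card A) * card A!\<close> injections of \<open>A\<close> into \<open>Y\<close> is completed by
  a matching of the remaining stubs. The side condition \<open>Q\<close> may refer to its target set and to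
  the stubs in \<open>K\<close>, which are never matched away.\<close>

lemma card_perfect_matchings_into:
  fixes Q :: "'s set \<Rightarrow> ('s \<Rightarrow> 's) \<Rightarrow> bool" and c :: "nat \<Rightarrow> nat \<Rightarrow> real"
  assumes "finite S" "card S = 2 * M" "A \<subseteq> S" "Y \<subseteq> S" "K \<subseteq> S"
    and "A \<inter> Y = {}" "K \<inter> A = {}" "K \<inter> Y = {}"
    and step: "\<And>S' Y' f x y. f \<in> perfect_matchings S' \<Longrightarrow> f x = y \<Longrightarrow> y \<in> Y' \<Longrightarrow>
        x \<notin> Y' \<Longrightarrow> x \<notin> K \<Longrightarrow> y \<notin> K \<Longrightarrow> Q Y' f \<longleftrightarrow> Q (Y' - {y}) (unmatch {x, y} f)"
    and base: "\<And>S' Y' M'. finite S' \<Longrightarrow> card S' = 2 * M' \<Longrightarrow> Y' \<subseteq> S' \<Longrightarrow> K \<subseteq> S' \<Longrightarrow>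
        K \<inter> Y' = {} \<Longrightarrow> real (card {f \<in> perfect_matchings S'. Q Y' f}) = c (card Y') M'"
  shows "real (card {f \<in> perfect_matchings S. (\<forall>x\<in>A. f x \<in> Y) \<and> Q Y f}) =
    real (card Y choose card A) * fact (card A) * c (card Y - card A) (M - card A)"
  using assms(1-8)
proof (induction "card A" arbitrary: S A Y M)
  case 0
  then have "A = {}"
    using finite_subset by fastforce
  then show ?case
    using base 0 by simp
next
  case (Suc t)
  obtain x0 where x0: "x0 \<in> A"
    using Suc.hyps(2) by (metis card.empty ex_in_conv nat.distinct(1))
  have "card {f \<in> perfect_matchings S. (\<forall>x\<in>A. f x \<in> Y) \<and> Q Y f} =
      (\<Sum>y\<in>Y. card {h \<in> perfect_matchings (S - {x0, y}).
        (\<forall>x\<in>A - {x0}. h x \<in> Y - {y}) \<and> Q (Y - {y}) h})"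
  proof (rule card_perfect_matchings_into_split)
    fix f y assume "f \<in> perfect_matchings S" "f x0 = y" "y \<in> Y"
    then show "Q Y f \<longleftrightarrow> Q (Y - {y}) (unmatch {x0, y} f)"
      by (rule step) (use x0 \<open>y \<in> Y\<close> Suc.prems in auto)
  qed (use Suc.prems x0 in auto)
  also have "real \<dots> = (\<Sum>y\<in>Y. real ((card Y - 1) choose t) * fact t * c (card Y - Suc t) (M - Suc t))"
    unfolding of_nat_sum
  proof (rule sum.cong[OF refl])
    fix y assume y: "y \<in> Y"
    have "x0 \<noteq> y"
      using Suc.prems(6) x0 y by blast
    then have "card (S - {x0, y}) = 2 * (M - 1)"
      using Suc.prems x0 y by (subst card_Diff_subset) auto
    moreover have t: "t = card (A - {x0})"
      using Suc.hyps(2) x0 by simp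
    ultimately have "real (card {h \<in> perfect_matchings (S - {x0, y}).
        (\<forall>x\<in>A - {x0}. h x \<in> Y - {y}) \<and> Q (Y - {y}) h}) =
        real (card (Y - {y}) choose card (A - {x0})) * fact (card (A - {x0})) *
        c (card (Y - {y}) - card (A - {x0})) (M - 1 - card (A - {x0}))"
      using Suc.prems x0 y by (intro Suc.hyps(1)) auto
    moreover have "card (Y - {y}) = card Y - 1"
      using Suc.prems y finite_subset by fastforce
    ultimately show "real (card {h \<in> perfect_matchings (S - {x0, y}).
        (\<forall>x\<in>A - {x0}. h x \<in> Y - {y}) \<and> Q (Y - {y}) h}) =
        real ((card Y - 1) choose t) * fact t * c (card Y - Suc t) (M - Suc t)"
      unfolding t[symmetric] by simp
  qed
  also have "\<dots> = real (card Y) * (real ((card Y - 1) choose t) * fact t) *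
      c (card Y - Suc t) (M - Suc t)"
    by (simp add: mult.assoc)
  also have "\<dots> = real (card Y choose Suc t) * fact (Suc t) * c (card Y - Suc t) (M - Suc t)"
    by (simp only: card_times_choose_fact)
  finally show ?case
    unfolding Suc.hyps(2) .
qed

lemma card_links_incl_excl:
  assumes "finite S" "finite X"
  shows "real (card {f \<in> perfect_matchings S. links f X Y \<and> Q f}) =
    (\<Sum>B | B \<subseteq> X \<and> B \<noteq> {}.
       (-1) ^ (card B + 1) * real (card {f \<in> perfect_matchings S. (\<forall>x\<in>B. f x \<in> Y) \<and> Q f}))"
proof -
  define F where "F = {f \<in> perfect_matchings S. Q f}"
  have "finite F"
    unfolding F_def using assms(1) by (simp add: finite_perfect_matchings)
  define \<mu> where "\<mu> T = real (card (T \<inter> F))" for T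
  have "\<mu> (U \<union> T) = \<mu> U + \<mu> T" if "disjnt U T" for U T
    unfolding \<mu>_def using that \<open>finite F\<close>
    by (simp add: Int_Un_distrib2 card_Un_disjoint disjnt_def disjoint_iff)
  then have "\<mu> (\<Union>x\<in>X. {f. f x \<in> Y}) =
      (\<Sum>B | B \<subseteq> X \<and> B \<noteq> {}. (-1) ^ (card B + 1) * \<mu> (\<Inter>x\<in>B. {f. f x \<in> Y}))"
    using assms(2) by (intro Incl_Excl_UN) auto
  moreover have "(\<Union>x\<in>X. {f. f x \<in> Y}) \<inter> F = {f \<in> perfect_matchings S. links f X Y \<and> Q f}"
    unfolding F_def links_def by auto
  moreover have "(\<Inter>x\<in>B. {f. f x \<in> Y}) \<inter> F = {f \<in> perfect_matchings S. (\<forall>x\<in>B. f x \<in> Y) \<and> Q f}"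
    if "B \<noteq> {}" for B
    unfolding F_def using that by auto
  ultimately show ?thesis
    unfolding \<mu>_def by (auto intro!: sum.cong)
qed

lemma sum_nonempty_subsets_by_card:
  fixes h :: "nat \<Rightarrow> real"
  assumes "finite X"
  shows "(\<Sum>B | B \<subseteq> X \<and> B \<noteq> {}. h (card B)) = (\<Sum>t = 1..card X. real (card X choose t) * h t)"
proof -
  have "card B \<in> {1..card X}" if "B \<subseteq> X" "B \<noteq> {}" for B
    using that assms finite_subset[OF that(1) assms] by (auto simp: Suc_le_eq card_gt_0_iff card_mono)
  then have "card ` {B. B \<subseteq> X \<and> B \<noteq> {}} \<subseteq> {1..card X}"
    by blast
  then have "(\<Sum>B | B \<subseteq> X \<and> B \<noteq> {}. h (card B)) =
      (\<Sum>t = 1..card X. \<Sum>B \<in> {B. B \<subseteq> X \<and> B \<noteq> {} \<and> card B = t}. h (card B))"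
    using assms by (subst sum.group[symmetric]) auto
  also have "\<dots> = (\<Sum>t = 1..card X. real (card X choose t) * h t)"
  proof (rule sum.cong[OF refl])
    fix t assume "t \<in> {1..card X}"
    then have "{B. B \<subseteq> X \<and> B \<noteq> {} \<and> card B = t} = {B. B \<subseteq> X \<and> card B = t}"
      by auto
    then show "(\<Sum>B \<in> {B. B \<subseteq> X \<and> B \<noteq> {} \<and> card B = t}. h (card B)) = real (card X choose t) * h t"
      using n_subsets[OF assms, of t] by simp
  qed
  finally show ?thesis .
qed

lemma card_links_alternating_sum:
  assumes "finite S" "finite X"
    and into: "\<And>B. B \<subseteq> X \<Longrightarrow> B \<noteq> {} \<Longrightarrow>
      real (card {f \<in> perfect_matchings S. (\<forall>x\<in>B. f x \<in> Y) \<and> Q f}) =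
      real (card Y choose card B) * fact (card B) * c (card B)"
  shows "real (card {f \<in> perfect_matchings S. links f X Y \<and> Q f}) =
    (\<Sum>t = 1..card X. (-1) ^ (t + 1) * real (card X choose t) * real (card Y choose t) * fact t * c t)"
proof -
  have "real (card {f \<in> perfect_matchings S. links f X Y \<and> Q f}) =
      (\<Sum>B | B \<subseteq> X \<and> B \<noteq> {}.
         (-1) ^ (card B + 1) * real (card {f \<in> perfect_matchings S. (\<forall>x\<in>B. f x \<in> Y) \<and> Q f}))"
    using assms(1,2) by (rule card_links_incl_excl)
  also have "\<dots> = (\<Sum>B | B \<subseteq> X \<and> B \<noteq> {}.
      (\<lambda>t. (-1) ^ (t + 1) * (real (card Y choose t) * fact t * c t)) (card B))"
    by (rule sum.cong) (simp_all add: into)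
  also have "\<dots> = (\<Sum>t = 1..card X.
      real (card X choose t) * ((-1) ^ (t + 1) * (real (card Y choose t) * fact t * c t)))"
    using assms(2) by (rule sum_nonempty_subsets_by_card)
  also have "\<dots> = (\<Sum>t = 1..card X.
      (-1) ^ (t + 1) * real (card X choose t) * real (card Y choose t) * fact t * c t)"
    by (simp add: mult_ac)
  finally show ?thesis .
qed

lemma stubprod_times_num_matchings:
  "t \<le> M \<Longrightarrow> stubprod t (int M) * real (num_matchings (M - t)) = real (num_matchings M)"
proof (induction t)
  case 0
  then show ?case
    by (simp add: stubprod_def)
next
  case (Suc t)
  define k where "k = M - Suc t"
  have Mt: "M - t = Suc k"
    using Suc.prems unfolding k_def by simp
  have "real_of_int (2 * int M + 1 - 2 * int (Suc t)) = real (2 * k + 1)"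
    using Suc.prems unfolding k_def by (simp add: of_nat_diff)
  then have "stubprod (Suc t) (int M) * real (num_matchings k) =
      stubprod t (int M) * real (num_matchings (Suc k))"
    by (simp add: stubprod_def algebra_simps)
  then show ?case
    using Suc Mt unfolding k_def by simp
qed

lemma stubprod_pos: "t \<le> M \<Longrightarrow> stubprod t (int M) > 0"
  unfolding stubprod_def by (rule prod_pos) auto

lemma alternating_sum_normalise:
  fixes g :: "nat \<Rightarrow> int \<Rightarrow> real"
  assumes "a + b \<le> 2 * M" "L \<le> a"
    and vanish: "\<And>t. L < t \<Longrightarrow> t \<le> a \<Longrightarrow> t \<le> b \<Longrightarrow> g t (int M - int t) = 0"
  shows "(\<Sum>t = 1..a. (-1) ^ (t + 1) * real (a choose t) * real (b choose t) * fact t *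
            (g t (int (M - t)) * real (num_matchings (M - t)))) =
    (\<Sum>t = 1..L. (-1) ^ (t + 1) * g t (int M - int t) *
            (real (a choose t) * real (b choose t) * fact t) / stubprod t (int M)) *
      real (num_matchings M)"
proof -
  define u where "u t = (-1) ^ (t + 1) * g t (int M - int t) *
      (real (a choose t) * real (b choose t) * fact t) / stubprod t (int M) *
      real (num_matchings M)" for t
  have "(-1) ^ (t + 1) * real (a choose t) * real (b choose t) * fact t *
      (g t (int (M - t)) * real (num_matchings (M - t))) = u t" for t
  proof (cases "t \<le> a \<and> t \<le> b")
    case True
    then have "t \<le> M"
      using assms(1) by linarith
    then show ?thesis
      unfolding u_def using stubprod_pos[of t M] stubprod_times_num_matchings[of t M]
      by (simp add: of_nat_diff field_simps)
  next
    case False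
    then have "a < t \<or> b < t"
      by auto
    then show ?thesis
      unfolding u_def by (auto simp: binomial_eq_0)
  qed
  then have "(\<Sum>t = 1..a. (-1) ^ (t + 1) * real (a choose t) * real (b choose t) * fact t *
      (g t (int (M - t)) * real (num_matchings (M - t)))) = (\<Sum>t = 1..a. u t)"
    by simp
  also have "\<dots> = (\<Sum>t = 1..L. u t)"
    using assms(2) vanish by (intro sum.mono_neutral_right) (auto simp: u_def not_le)
  finally show ?thesis
    unfolding u_def by (simp add: sum_distrib_right)
qed

lemma card_disjoint_subsets_le:
  assumes "finite S" "X \<subseteq> S" "Y \<subseteq> S" "X \<inter> Y = {}"
  shows "card X + card Y \<le> card S"
  using assms card_mono[of S "X \<union> Y"] by (simp add: card_Un_disjoint finite_subset)

lemma card_links: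
  assumes "finite S" "card S = 2 * M" "X \<subseteq> S" "Y \<subseteq> S" "X \<inter> Y = {}"
  shows "real (card {f \<in> perfect_matchings S. links f X Y}) =
    fA (card X) (card Y) (int M) * real (num_matchings M)"
proof -
  have into: "real (card {f \<in> perfect_matchings S. (\<forall>x\<in>B. f x \<in> Y) \<and> True}) =
      real (card Y choose card B) * fact (card B) * real (num_matchings (M - card B))"
    if "B \<subseteq> X" for B
  proof (rule card_perfect_matchings_into[where K = "{}" and Q = "\<lambda>_ _. True"
        and c = "\<lambda>_ M'. real (num_matchings M')"])
    fix S' Y' M'
    assume "finite S'" "card S' = 2 * M'"
    then show "real (card {f \<in> perfect_matchings S'. True}) = real (num_matchings M')"
      by (simp add: card_perfect_matchings)
  qed (use assms that in auto)
  have "real (card {f \<in> perfect_matchings S. links f X Y \<and> True}) =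
      (\<Sum>t = 1..card X. (-1) ^ (t + 1) * real (card X choose t) * real (card Y choose t) * fact t *
         (1 * real (num_matchings (M - t))))"
    using assms(1,3) finite_subset by (intro card_links_alternating_sum) (auto simp: into[simplified])
  also have "\<dots> = (\<Sum>t = 1..min (card X) (card Y). (-1) ^ (t + 1) * 1 *
      (real (card X choose t) * real (card Y choose t) * fact t) / stubprod t (int M)) *
      real (num_matchings M)"
    using card_disjoint_subsets_le[OF assms(1,3-5)] assms(2)
    by (intro alternating_sum_normalise[where g = "\<lambda>_ _. 1"]) auto
  finally show ?thesis
    by (simp add: fA_def)
qed

lemma card_common_links:
  assumes "finite S" "card S = 2 * M" "X \<subseteq> S" "Y \<subseteq> S" "Z \<subseteq> S"
    and "X \<inter> Y = {}" "X \<inter> Z = {}" "Y \<inter> Z = {}"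
  shows "real (card {f \<in> perfect_matchings S. links f X Z \<and> links f Y Z}) =
    fC (card X) (card Y) (card Z) (int M) * real (num_matchings M)"
proof -
  let ?g = "\<lambda>t M'. fA (card X) (card Z - t) M'"
  have "real (card {f \<in> perfect_matchings S. (\<forall>y\<in>B. f y \<in> Z) \<and> links f X Z}) =
      real (card Z choose card B) * fact (card B) *
      (?g (card B) (int (M - card B)) * real (num_matchings (M - card B)))"
    if "B \<subseteq> Y" for B
  proof (rule card_perfect_matchings_into[where K = X and Q = "\<lambda>Z' f. links f X Z'"])
    fix S' Z' f x z
    assume "f \<in> perfect_matchings S'" "f x = z" "z \<in> Z'" "x \<notin> Z'" "x \<notin> X" "z \<notin> X"
    moreover have "Z' - {x, z} = Z' - {z}"
      using \<open>x \<notin> Z'\<close> by auto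
    ultimately show "links f X Z' \<longleftrightarrow> links (unmatch {x, z} f) X (Z' - {z})"
      using links_unmatch by metis
  next
    fix S' Z' M'
    assume "finite S'" "card S' = 2 * M'" "Z' \<subseteq> S'" "X \<subseteq> S'" "X \<inter> Z' = {}"
    then show "real (card {f \<in> perfect_matchings S'. links f X Z'}) =
        fA (card X) (card Z') (int M') * real (num_matchings M')"
      by (intro card_links) auto
  qed (use assms that in auto)
  then have "real (card {f \<in> perfect_matchings S. links f Y Z \<and> links f X Z}) =
      (\<Sum>t = 1..card Y. (-1) ^ (t + 1) * real (card Y choose t) * real (card Z choose t) * fact t *
         (?g t (int (M - t)) * real (num_matchings (M - t))))"
    using assms(1,4) finite_subset by (intro card_links_alternating_sum) auto
  also have "\<dots> = (\<Sum>t = 1..min (card Y) (card Z - 1). (-1) ^ (t + 1) * ?g t (int M - int t) *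
      (real (card Y choose t) * real (card Z choose t) * fact t) / stubprod t (int M)) *
      real (num_matchings M)"
    using card_disjoint_subsets_le[OF assms(1,4,5,8)] assms(2)
    by (intro alternating_sum_normalise) (auto simp: fA_def)
  finally show ?thesis
    by (simp add: fC_def conj_commute mult_ac)
qed

lemma fC_eq_0:
  "a = 0 \<or> b = 0 \<Longrightarrow> fC a b c M = 0"
  unfolding fC_def fA_def by auto

lemma card_triangle_links:
  assumes "finite S" "card S = 2 * M" "X \<subseteq> S" "Y \<subseteq> S" "Z \<subseteq> S"
    and "X \<inter> Y = {}" "X \<inter> Z = {}" "Y \<inter> Z = {}"
  shows "real (card {f \<in> perfect_matchings S. links f X Z \<and> links f Y Z \<and> links f X Y}) =
    fT (card X) (card Y) (card Z) (int M) * real (num_matchings M)"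
proof -
  let ?g = "\<lambda>t M'. fC (card X - t) (card Y - t) (card Z) M'"
  have "real (card {f \<in> perfect_matchings S. (\<forall>x\<in>B. f x \<in> Y) \<and> links f X Z \<and> links f Y Z}) =
      real (card Y choose card B) * fact (card B) *
      (?g (card B) (int (M - card B)) * real (num_matchings (M - card B)))"
    if B: "B \<subseteq> X" for B
  proof -
    define R where "R = X - B"
    \<comment> \<open>the stubs in \<open>B\<close> are matched into \<open>Y\<close>, so only those in \<open>R\<close> can reach \<open>Z\<close>\<close>
    have "{f \<in> perfect_matchings S. (\<forall>x\<in>B. f x \<in> Y) \<and> links f X Z \<and> links f Y Z} =
        {f \<in> perfect_matchings S. (\<forall>x\<in>B. f x \<in> Y) \<and> links f R Z \<and> links f Y Z}"
      using assms(8) unfolding R_def links_def by blast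
    also have "real (card \<dots>) = real (card Y choose card B) * fact (card B) *
        (fC (card R) (card Y - card B) (card Z) (int (M - card B)) *
         real (num_matchings (M - card B)))"
    proof (rule card_perfect_matchings_into[where K = "R \<union> Z"
          and Q = "\<lambda>Y' f. links f R Z \<and> links f Y' Z"])
      fix S' Y' f x y
      assume f: "f \<in> perfect_matchings S'" "f x = y" and "y \<in> Y'" "x \<notin> Y'" "x \<notin> R \<union> Z" "y \<notin> R \<union> Z"
      moreover have "f y = x"
        using f perfect_matchings_involution by metis
      ultimately have "links f R Z \<longleftrightarrow> links (unmatch {x, y} f) R Z"
        and "links f Y' Z \<longleftrightarrow> links (unmatch {x, y} f) (Y' - {y}) Z"
        using links_unmatch[OF f, of R Z] links_unmatch[OF f, of "Y' - {y}" Z]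
        unfolding links_def by (auto simp: insert_Diff_if)
      then show "(links f R Z \<and> links f Y' Z) \<longleftrightarrow>
          (links (unmatch {x, y} f) R Z \<and> links (unmatch {x, y} f) (Y' - {y}) Z)"
        by simp
    next
      fix S' Y' M'
      assume "finite S'" "card S' = 2 * M'" "Y' \<subseteq> S'" "R \<union> Z \<subseteq> S'" "(R \<union> Z) \<inter> Y' = {}"
      moreover have "R \<inter> Z = {}"
        using assms(7) unfolding R_def by auto
      ultimately show "real (card {f \<in> perfect_matchings S'. links f R Z \<and> links f Y' Z}) =
          fC (card R) (card Y') (card Z) (int M') * real (num_matchings M')"
        by (intro card_common_links) auto
    qed (use assms B in \<open>auto simp: R_def\<close>)
    also have "card R = card X - card B"
      unfolding R_def using assms(1,3) B by (meson card_Diff_subset finite_subset)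
    finally show ?thesis .
  qed
  then have "real (card {f \<in> perfect_matchings S. links f X Y \<and> links f X Z \<and> links f Y Z}) =
      (\<Sum>t = 1..card X. (-1) ^ (t + 1) * real (card X choose t) * real (card Y choose t) * fact t *
         (?g t (int (M - t)) * real (num_matchings (M - t))))"
    using assms(1,3) finite_subset by (intro card_links_alternating_sum) auto
  also have "\<dots> = (\<Sum>t = 1..min (card X - 1) (card Y - 1). (-1) ^ (t + 1) * ?g t (int M - int t) *
      (real (card X choose t) * real (card Y choose t) * fact t) / stubprod t (int M)) *
      real (num_matchings M)"
    using card_disjoint_subsets_le[OF assms(1,3,4,6)] assms(2)
    by (intro alternating_sum_normalise) (auto intro!: fC_eq_0)
  finally show ?thesis
    by (simp add: fT_def conj_commute conj_left_commute)
qed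

section \<open>The configuration model\<close>

definition node_stubs :: "'a set \<Rightarrow> ('a \<Rightarrow> 'a \<Rightarrow> bool) \<Rightarrow> 'a \<Rightarrow> ('a \<times> nat) set" where
  "node_stubs V E u = {u} \<times> {..<deg V E u}"

lemma stubs_eq_Sigma: "stubs V E = Sigma V (\<lambda>u. {..<deg V E u})"
  unfolding stubs_def by auto

lemma node_stubs_subset: "u \<in> V \<Longrightarrow> node_stubs V E u \<subseteq> stubs V E"
  unfolding node_stubs_def stubs_def by auto

lemma node_stubs_disjoint: "u \<noteq> v \<Longrightarrow> node_stubs V E u \<inter> node_stubs V E v = {}"
  unfolding node_stubs_def by auto

lemma card_node_stubs: "card (node_stubs V E u) = deg V E u"
  unfolding node_stubs_def by (simp add: card_cartesian_product)

lemma cm_conn_iff_links: "cm_conn V E f u v \<longleftrightarrow> links f (node_stubs V E u) (node_stubs V E v)"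
  unfolding cm_conn_def links_def node_stubs_def by force

lemma stub_matchings_eq: "stub_matchings V E = perfect_matchings (stubs V E)"
  unfolding stub_matchings_def perfect_matchings_def ..

lemma cm_conn_sym:
  "f \<in> perfect_matchings (stubs V E) \<Longrightarrow> cm_conn V E f u v \<longleftrightarrow> cm_conn V E f v u"
  unfolding cm_conn_iff_links links_def by (metis perfect_matchings_involution)

lemma expectation_of_bool:
  "measure_pmf.expectation p (\<lambda>x. of_bool (P x)) = measure_pmf.prob p {x. P x}"
proof -
  have "(\<lambda>x. of_bool (P x) :: real) = indicator {x. P x}"
    by (auto simp: indicator_def)
  then show ?thesis
    by simp
qed

lemma weight_eq:
  "weight V E f i j =
    (if cm_conn V E f i j then
       if deg V E i = 1 \<or> deg V E j = 1 then Pij V E i j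
       else (2 * real (cm_common V E f i j) + 3) * Pij V E i j
     else Pij V E i j / 4 * real (cm_common V E f i j))"
  unfolding weight_def CNij_def by (simp add: algebra_simps)

lemma cm_common_eq_sum:
  "finite V \<Longrightarrow> real (cm_common V E f i j) =
    (\<Sum>r\<in>V - {i, j}. of_bool (cm_conn V E f i r \<and> cm_conn V E f j r))"
  unfolding cm_common_def by (simp add: Int_def conj_ac set_diff_eq)

lemma cm_conn_unique_of_deg_one:
  assumes "deg V E i = 1" "cm_conn V E f i j" "cm_conn V E f i r"
  shows "j = r"
  using assms unfolding cm_conn_def by auto

lemma cm_common_eq_0_of_deg_one:
  assumes f: "f \<in> perfect_matchings (stubs V E)" and ij: "cm_conn V E f i j"
    and "deg V E i = 1 \<or> deg V E j = 1"
  shows "cm_common V E f i j = 0"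
proof -
  have ji: "cm_conn V E f j i"
    using cm_conn_sym[OF f, of i j] ij by blast
  have "{r \<in> V. r \<noteq> i \<and> r \<noteq> j \<and> cm_conn V E f i r \<and> cm_conn V E f j r} = {}"
    using assms(3) cm_conn_unique_of_deg_one[OF _ ij] cm_conn_unique_of_deg_one[OF _ ji] by blast
  then show ?thesis
    unfolding cm_common_def by (simp only: card.empty)
qed

locale simple_graph =
  fixes V :: "'a set" and E :: "'a \<Rightarrow> 'a \<Rightarrow> bool"
  assumes finite_vertices: "finite V"
    and edges_sym: "E u v \<Longrightarrow> E v u"
    and edges_irrefl: "\<not> E u u"
begin

lemma sum_deg_eq_twice_num_edges: "(\<Sum>u\<in>V. deg V E u) = 2 * num_edges V E"
proof -
  define D where "D = Sigma V (\<lambda>u. {v \<in> V. E u v})"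
  define edge :: "'a \<times> 'a \<Rightarrow> 'a set" where "edge = (\<lambda>(u, v). {u, v})"
  have "finite D"
    unfolding D_def using finite_vertices by auto
  have "(\<Sum>u\<in>V. deg V E u) = card D"
    unfolding D_def deg_def using finite_vertices by (simp add: card_SigmaI)
  also have "\<dots> = (\<Sum>e\<in>edge ` D. card {d \<in> D. edge d = e})"
    using \<open>finite D\<close> by (intro card_eq_sum_card_fibres) auto
  also have "\<dots> = (\<Sum>e\<in>edge ` D. 2)"
  proof (rule sum.cong[OF refl])
    fix e assume "e \<in> edge ` D"
    then obtain u v where uv: "u \<in> V" "v \<in> V" "E u v" "e = {u, v}"
      unfolding D_def edge_def by auto
    then have "u \<noteq> v" "E v u"
      using edges_irrefl edges_sym by auto
    with uv have "{d \<in> D. edge d = e} = {(u, v), (v, u)}"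
      unfolding D_def edge_def by (auto simp: doubleton_eq_iff)
    then show "card {d \<in> D. edge d = e} = 2"
      using \<open>u \<noteq> v\<close> by simp
  qed
  also have "edge ` D = {{u, v} | u v. u \<in> V \<and> v \<in> V \<and> E u v}"
    unfolding edge_def D_def by auto
  finally show ?thesis
    unfolding num_edges_def by simp
qed

lemma card_stubs: "card (stubs V E) = 2 * num_edges V E"
  using finite_vertices by (simp add: stubs_eq_Sigma card_SigmaI sum_deg_eq_twice_num_edges)

lemma finite_stubs: "finite (stubs V E)"
  using finite_vertices by (simp add: stubs_eq_Sigma)

lemma set_pmf_config_model: "set_pmf (config_model V E) = perfect_matchings (stubs V E)"
proof -
  have "card (perfect_matchings (stubs V E)) = num_matchings (num_edges V E)"
    by (intro card_perfect_matchings finite_stubs card_stubs)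
  then have "perfect_matchings (stubs V E) \<noteq> {}"
    using num_matchings_pos[of "num_edges V E"] by auto
  then show ?thesis
    unfolding config_model_def stub_matchings_eq
    by (simp add: finite_perfect_matchings finite_stubs)
qed

lemma prob_config_model:
  "measure_pmf.prob (config_model V E) {f. P f} =
    real (card {f \<in> perfect_matchings (stubs V E). P f}) / real (num_matchings (num_edges V E))"
proof -
  have "perfect_matchings (stubs V E) \<noteq> {}"
    using set_pmf_config_model set_pmf_not_empty by metis
  moreover have "perfect_matchings (stubs V E) \<inter> {f. P f} = {f \<in> perfect_matchings (stubs V E). P f}"
    by auto
  ultimately show ?thesis
    unfolding config_model_def stub_matchings_eq
    by (simp add: measure_pmf_of_set finite_perfect_matchings finite_stubs
        card_perfect_matchings card_stubs)
qed

lemma prob_cm_conn: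
  assumes "i \<in> V" "j \<in> V" "i \<noteq> j"
  shows "measure_pmf.prob (config_model V E) {f. cm_conn V E f i j} =
    fA (deg V E i) (deg V E j) (int (num_edges V E))"
  using card_links[OF finite_stubs card_stubs node_stubs_subset node_stubs_subset node_stubs_disjoint]
    assms num_matchings_pos[of "num_edges V E"]
  by (simp add: prob_config_model cm_conn_iff_links card_node_stubs)

lemma prob_common_neighbour:
  assumes "i \<in> V" "j \<in> V" "r \<in> V" "i \<noteq> j" "i \<noteq> r" "j \<noteq> r"
  shows "measure_pmf.prob (config_model V E) {f. cm_conn V E f i r \<and> cm_conn V E f j r} =
    fC (deg V E i) (deg V E j) (deg V E r) (int (num_edges V E))"
  using card_common_links[OF finite_stubs card_stubs node_stubs_subset node_stubs_subset
      node_stubs_subset node_stubs_disjoint node_stubs_disjoint node_stubs_disjoint]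
    assms num_matchings_pos[of "num_edges V E"]
  by (simp add: prob_config_model cm_conn_iff_links card_node_stubs)

lemma prob_triangle:
  assumes "i \<in> V" "j \<in> V" "r \<in> V" "i \<noteq> j" "i \<noteq> r" "j \<noteq> r"
  shows "measure_pmf.prob (config_model V E)
      {f. cm_conn V E f i r \<and> cm_conn V E f j r \<and> cm_conn V E f i j} =
    fT (deg V E i) (deg V E j) (deg V E r) (int (num_edges V E))"
  using card_triangle_links[OF finite_stubs card_stubs node_stubs_subset node_stubs_subset
      node_stubs_subset node_stubs_disjoint node_stubs_disjoint node_stubs_disjoint]
    assms num_matchings_pos[of "num_edges V E"]
  by (simp add: prob_config_model cm_conn_iff_links card_node_stubs)

lemma integrable_config_model: "integrable (measure_pmf (config_model V E)) (g :: _ \<Rightarrow> real)"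
  by (rule integrable_measure_pmf_finite)
    (simp add: set_pmf_config_model finite_perfect_matchings finite_stubs)

lemma expected_weight_deg_one:
  assumes "deg V E i = 1 \<or> deg V E j = 1"
  shows "measure_pmf.expectation (config_model V E) (\<lambda>f. weight V E f i j) =
    Pij V E i j * (\<Sum>r\<in>V - {i, j}. measure_pmf.prob (config_model V E)
        {f. cm_conn V E f i r \<and> cm_conn V E f j r}) / 4
    + Pij V E i j * measure_pmf.prob (config_model V E) {f. cm_conn V E f i j}"
proof -
  have "weight V E f i j = Pij V E i j / 4 *
      (\<Sum>r\<in>V - {i, j}. of_bool (cm_conn V E f i r \<and> cm_conn V E f j r))
      + Pij V E i j * of_bool (cm_conn V E f i j)"
    if "f \<in> set_pmf (config_model V E)" for f
    using that assms cm_common_eq_0_of_deg_one[of f V E i j]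
    by (auto simp: weight_eq set_pmf_config_model cm_common_eq_sum[OF finite_vertices, symmetric])
  then have "measure_pmf.expectation (config_model V E) (\<lambda>f. weight V E f i j) =
      measure_pmf.expectation (config_model V E) (\<lambda>f. Pij V E i j / 4 *
        (\<Sum>r\<in>V - {i, j}. of_bool (cm_conn V E f i r \<and> cm_conn V E f j r))
        + Pij V E i j * of_bool (cm_conn V E f i j))"
    by (intro integral_cong_AE) (auto simp: AE_measure_pmf_iff)
  then show ?thesis
    by (simp add: integrable_config_model integral_sum expectation_of_bool)
qed

lemma expected_weight_deg_gt_one:
  assumes "deg V E i > 1" "deg V E j > 1"
  shows "measure_pmf.expectation (config_model V E) (\<lambda>f. weight V E f i j) =
    Pij V E i j / 4 * (\<Sum>r\<in>V - {i, j}.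
        measure_pmf.prob (config_model V E) {f. cm_conn V E f i r \<and> cm_conn V E f j r}
      - measure_pmf.prob (config_model V E)
          {f. cm_conn V E f i r \<and> cm_conn V E f j r \<and> cm_conn V E f i j})
    + 2 * Pij V E i j * (\<Sum>r\<in>V - {i, j}. measure_pmf.prob (config_model V E)
        {f. cm_conn V E f i r \<and> cm_conn V E f j r \<and> cm_conn V E f i j})
    + 3 * Pij V E i j * measure_pmf.prob (config_model V E) {f. cm_conn V E f i j}"
proof -
  have "weight V E f i j = Pij V E i j / 4 * (\<Sum>r\<in>V - {i, j}.
        of_bool (cm_conn V E f i r \<and> cm_conn V E f j r)
      - of_bool (cm_conn V E f i r \<and> cm_conn V E f j r \<and> cm_conn V E f i j))
    + 2 * Pij V E i j * (\<Sum>r\<in>V - {i, j}.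
        of_bool (cm_conn V E f i r \<and> cm_conn V E f j r \<and> cm_conn V E f i j))
    + 3 * Pij V E i j * of_bool (cm_conn V E f i j)" for f
    using assms
    by (cases "cm_conn V E f i j")
      (simp_all add: weight_eq cm_common_eq_sum[OF finite_vertices] algebra_simps)
  then show ?thesis
    by (simp add: integrable_config_model integral_sum expectation_of_bool)
qed

end

theorem theorem1:
  fixes V :: "'a set" and E :: "'a \<Rightarrow> 'a \<Rightarrow> bool" and i j :: 'a
  assumes "finite V"
    and "\<And>u v. E u v \<Longrightarrow> u \<in> V \<and> v \<in> V"
    and "\<And>u v. E u v \<Longrightarrow> E v u"
    and "\<And>u. \<not> E u u"
    and "num_edges V E \<ge> 1"
    and "i \<in> V" and "j \<in> V" and "i \<noteq> j"
    and "deg V E i \<ge> 1" and "deg V E j \<ge> 1"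
  defines "Padj \<equiv> measure_pmf.prob (config_model V E) {f. cm_conn V E f i j}"
    and "Pcn \<equiv> \<lambda>r. measure_pmf.prob (config_model V E)
                   {f. cm_conn V E f i r \<and> cm_conn V E f j r}"
    and "Ptri \<equiv> \<lambda>r. measure_pmf.prob (config_model V E)
                   {f. cm_conn V E f i r \<and> cm_conn V E f j r \<and> cm_conn V E f i j}"
    and "EW \<equiv> measure_pmf.expectation (config_model V E) (\<lambda>f. weight V E f i j)"
  shows "((deg V E i = 1 \<or> deg V E j = 1) \<longrightarrow>
            EW = Pij V E i j * (\<Sum>r \<in> V - {i, j}. Pcn r) / 4 + Pij V E i j * Padj)
       \<and> ((deg V E i > 1 \<and> deg V E j > 1) \<longrightarrow>
            EW = Pij V E i j / 4 * (\<Sum>r \<in> V - {i, j}. Pcn r - Ptri r)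
                 + 2 * Pij V E i j * (\<Sum>r \<in> V - {i, j}. Ptri r)
                 + 3 * Pij V E i j * Padj)
       \<and> Padj = fA (deg V E i) (deg V E j) (int (num_edges V E))
       \<and> (\<forall>r \<in> V - {i, j}.
            Pcn r = fC (deg V E i) (deg V E j) (deg V E r) (int (num_edges V E))
          \<and> Ptri r = fT (deg V E i) (deg V E j) (deg V E r) (int (num_edges V E)))"
proof -
  interpret simple_graph V E
    using assms(1,3,4) by unfold_locales
  have "Padj = fA (deg V E i) (deg V E j) (int (num_edges V E))"
    unfolding Padj_def using assms(6-8) by (rule prob_cm_conn)
  moreover have "\<forall>r \<in> V - {i, j}.
      Pcn r = fC (deg V E i) (deg V E j) (deg V E r) (int (num_edges V E))
    \<and> Ptri r = fT (deg V E i) (deg V E j) (deg V E r) (int (num_edges V E))"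
    unfolding Pcn_def Ptri_def using assms(6-8) prob_common_neighbour prob_triangle by auto
  moreover have "(deg V E i = 1 \<or> deg V E j = 1) \<longrightarrow>
      EW = Pij V E i j * (\<Sum>r \<in> V - {i, j}. Pcn r) / 4 + Pij V E i j * Padj"
    unfolding EW_def Pcn_def Padj_def using expected_weight_deg_one by simp
  moreover have "(deg V E i > 1 \<and> deg V E j > 1) \<longrightarrow>
      EW = Pij V E i j / 4 * (\<Sum>r \<in> V - {i, j}. Pcn r - Ptri r)
        + 2 * Pij V E i j * (\<Sum>r \<in> V - {i, j}. Ptri r) + 3 * Pij V E i j * Padj"
    unfolding EW_def Pcn_def Ptri_def Padj_def using expected_weight_deg_gt_one by simp
  ultimately show ?thesis
    by blast
qed

end
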